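(* Let $r\ne0$ be an integer, $K$ a field of characteristic not dividing $2r$, and $E_r$ the elliptic curve $y^2=x^3-r^{-1}x$, embedded in $\mathbb{P}^2$ as $x^3-rxz^2-ry^2z=0$, the affine point $(x,y)$ corresponding to $(x:y:r^{-1})$ and $O=(0:1:0)$. Let $Q=(a,b)$ be an affine $3$-torsion point of $E_r$, and let $A\in\mathrm{GL}_3(K)$ be such that the projective transformation $\bar A$ of $\mathbb{P}^2$ (acting on column vectors of homogeneous coordinates $(x,y,z)^{\mathrm T}$) maps $E_r$ into itself and restricts to the translation $\tau_Q:P\mapsto P+Q$ on $E_r$. Then there exists $\nu\in K^\times$ such that, up to multiplication by a nonzero scalar, $$A=\begin{pmatrix} rab+2ab\nu & ra^2 & -2ra^2b\nu\\ (-3r-2\nu)b^2 & rab & 2rab^2\nu\\ (1-2\nu a^2)b & a & 2ra^3b\nu\end{pmatrix}.$$ *)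

theory Defs
  imports "HOL-Analysis.Analysis" "HOL-Computational_Algebra.Polynomial"
begin

datatype 'a ept = Inf | Aff 'a 'a

fun on_curve :: "'a::field \<Rightarrow> 'a ept \<Rightarrow> bool" where
  "on_curve c Inf = True"
| "on_curve c (Aff x y) = (y ^ 2 = x ^ 3 + c * x)"

fun ec_add :: "'a::field \<Rightarrow> 'a ept \<Rightarrow> 'a ept \<Rightarrow> 'a ept" where
  "ec_add c Inf P = P"
| "ec_add c P Inf = P"
| "ec_add c (Aff x1 y1) (Aff x2 y2) =
     (if x1 = x2 then
        (if y1 = - y2 then Inf
         else (let l = (3 * x1 ^ 2 + c) / (2 * y1);
                   x3 = l ^ 2 - 2 * x1
               in Aff x3 (l * (x1 - x3) - y1)))
      else (let l = (y2 - y1) / (x2 - x1);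
                x3 = l ^ 2 - x1 - x2
            in Aff x3 (l * (x1 - x3) - y1)))"

(* homogeneous coordinates of a point of E_r (curve x^3 - r x z^2 - r y^2 z = 0):
   affine (x,y) |-> (x : y : r^{-1}),  O |-> (0 : 1 : 0);  rinv stands for r^{-1} *)
fun proj_coords :: "'a::field \<Rightarrow> 'a ept \<Rightarrow> 'a ^ 3" where
  "proj_coords rinv Inf = vector [0, 1, 0]"
| "proj_coords rinv (Aff x y) = vector [x, y, rinv]"

definition proj_eq :: "'a::field ^ 3 \<Rightarrow> 'a ^ 3 \<Rightarrow> bool" where
  "proj_eq u v \<longleftrightarrow> (\<exists>c. c \<noteq> 0 \<and> u = c *s v)"

definition is_field_hom :: "('a::field \<Rightarrow> 'b::field) \<Rightarrow> bool" where
  "is_field_hom \<phi> \<longleftrightarrow> (\<forall>x y. \<phi> (x + y) = \<phi> x + \<phi> y \<and> \<phi> (x * y) = \<phi> x * \<phi> y) \<and> \<phi> 1 = 1"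

definition map_mat :: "('a \<Rightarrow> 'b) \<Rightarrow> 'a ^ 'n ^ 'm \<Rightarrow> 'b ^ 'n ^ 'm" where
  "map_mat \<phi> A = (\<chi> i j. \<phi> (A $ i $ j))"

definition lemma_mat :: "'a::field \<Rightarrow> 'a \<Rightarrow> 'a \<Rightarrow> 'a \<Rightarrow> 'a ^ 3 ^ 3" where
  "lemma_mat r a b \<nu> = vector [
     vector [r*a*b + 2*a*b*\<nu>, r*a^2, -2*r*a^2*b*\<nu>],
     vector [(-3*r - 2*\<nu>)*b^2, r*a*b, 2*r*a*b^2*\<nu>],
     vector [(1 - 2*\<nu>*a^2)*b, a, 2*r*a^3*b*\<nu>]]"

end

theory Submission
  imports Defs
begin

(* The translation tau_Q sends O to Q, -Q to O, Q to 2Q = -Q, and the 2-torsion point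
   T = (0,0) to T + Q = (-1/(ra), b/(ra^2)).  In homogeneous coordinates the images of O and T
   fix the second and third columns of A up to scalars l1, l4, and the images of -Q and Q
   then fix the first column; besides the overall scale only nu = l4/(2 l1 a^2 b) stays free.
   The hypothesis speaks about points over L but descends to K: a field homomorphism is
   injective, and a proportionality factor between vectors with entries in phi(K) lies in
   phi(K). *)

definition map_vec :: "('a \<Rightarrow> 'b) \<Rightarrow> 'a ^ 'n \<Rightarrow> 'b ^ 'n" where
  "map_vec \<phi> v = (\<chi> i. \<phi> (v $ i))"

locale field_hom =
  fixes \<phi> :: "'a::field \<Rightarrow> 'b::field"
  assumes is_field_hom: "is_field_hom \<phi>"
begin

lemma hom_add: "\<phi> (x + y) = \<phi> x + \<phi> y"
  and hom_mult: "\<phi> (x * y) = \<phi> x * \<phi> y"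
  and hom_one: "\<phi> 1 = 1"
  using is_field_hom by (simp_all add: is_field_hom_def)

lemma hom_zero: "\<phi> 0 = 0"
  using hom_add[of 0 0] by (metis add.right_neutral add_left_cancel)

lemma hom_uminus: "\<phi> (- x) = - \<phi> x"
  using hom_add[of x "- x"] by (simp add: hom_zero minus_unique)

lemma hom_diff: "\<phi> (x - y) = \<phi> x - \<phi> y"
  by (simp only: diff_conv_add_uminus hom_add hom_uminus)

lemma hom_inverse: "\<phi> (inverse x) = inverse (\<phi> x)"
proof (cases "x = 0")
  case False
  then have "\<phi> x * \<phi> (inverse x) = 1"
    by (simp flip: hom_mult add: hom_one)
  then show ?thesis
    by (rule inverse_unique[symmetric])
qed (simp add: hom_zero)

lemma hom_divide: "\<phi> (x / y) = \<phi> x / \<phi> y"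
  by (simp add: divide_inverse hom_mult hom_inverse)

lemma hom_power: "\<phi> (x ^ n) = \<phi> x ^ n"
  by (induction n) (simp_all add: hom_one hom_mult)

lemma hom_numeral: "\<phi> (numeral n) = numeral n"
  by (induction n) (simp_all only: numeral.simps hom_add hom_one)

lemma hom_sum: "\<phi> (sum f A) = (\<Sum>x\<in>A. \<phi> (f x))"
  by (induction A rule: infinite_finite_induct) (simp_all add: hom_zero hom_add)

lemma hom_eq_iff: "\<phi> x = \<phi> y \<longleftrightarrow> x = y"
proof
  assume "\<phi> x = \<phi> y"
  show "x = y"
  proof (rule ccontr)
    assume "x \<noteq> y"
    then have "\<phi> (x - y) * \<phi> (inverse (x - y)) = 1"
      by (simp flip: hom_mult add: hom_one)
    with \<open>\<phi> x = \<phi> y\<close> show False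
      by (simp add: hom_diff)
  qed
qed simp

lemma hom_eq_zero_iff: "\<phi> x = 0 \<longleftrightarrow> x = 0"
  using hom_eq_iff[of x 0] by (simp add: hom_zero)

lemma hom_eq_uminus_iff: "\<phi> x = - \<phi> y \<longleftrightarrow> x = - y"
  using hom_eq_iff[of x "- y"] by (simp add: hom_uminus)

lemma map_vec_matrix_vector_mult: "map_vec \<phi> (m *v v) = map_mat \<phi> m *v map_vec \<phi> v"
  by (simp add: vec_eq_iff map_vec_def map_mat_def matrix_vector_mult_def hom_sum hom_mult)

lemma map_vec_proj_coords: "map_vec \<phi> (proj_coords q P) = proj_coords (\<phi> q) (map_ept \<phi> P)"
  by (cases P) (simp_all add: vec_eq_iff forall_3 map_vec_def hom_zero hom_one)

lemma on_curve_map_ept: "on_curve (\<phi> c) (map_ept \<phi> P) \<longleftrightarrow> on_curve c P"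
  by (cases P) (simp_all add: hom_eq_iff flip: hom_add hom_mult hom_power)

lemma map_ept_ec_add: "map_ept \<phi> (ec_add c P Q) = ec_add (\<phi> c) (map_ept \<phi> P) (map_ept \<phi> Q)"
  by (cases P; cases Q)
    (simp_all add: Let_def hom_add hom_mult hom_one hom_uminus hom_diff hom_divide hom_power
      hom_numeral hom_eq_iff hom_eq_uminus_iff)

lemma proj_eq_map_vecD:
  assumes "proj_eq (map_vec \<phi> u) (map_vec \<phi> v)" and "v \<noteq> 0"
  shows "proj_eq u v"
proof -
  obtain c where "c \<noteq> 0" and c: "map_vec \<phi> u = c *s map_vec \<phi> v"
    using assms(1) unfolding proj_eq_def by blast
  obtain i where "v $ i \<noteq> 0"
    using assms(2) by (auto simp: vec_eq_iff)
  define d where "d = u $ i / v $ i"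
  have "\<phi> d = c"
    using c \<open>v $ i \<noteq> 0\<close> by (simp add: d_def hom_divide vec_eq_iff map_vec_def hom_eq_zero_iff)
  then have "\<phi> (u $ j) = \<phi> (d * v $ j)" for j
    using c by (simp add: vec_eq_iff map_vec_def hom_mult)
  then have "u = d *s v"
    by (simp add: vec_eq_iff hom_eq_iff)
  moreover have "d \<noteq> 0"
    using \<open>\<phi> d = c\<close> \<open>c \<noteq> 0\<close> hom_zero by auto
  ultimately show ?thesis
    unfolding proj_eq_def by blast
qed

end

lemma proj_coords_nonzero: "q \<noteq> 0 \<Longrightarrow> proj_coords q P \<noteq> 0"
  by (cases P) (simp_all add: vec_eq_iff forall_3)

lemma ec_add_Aff_eq_Inf_iff: "ec_add c (Aff a b) P = Inf \<longleftrightarrow> P = Aff a (- b)"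
  by (cases P) (auto simp: Let_def)

lemma ec_add_3_torsionD:
  assumes "ec_add c (Aff a b) (ec_add c (Aff a b) (Aff a b)) = Inf"
  shows "ec_add c (Aff a b) (Aff a b) = Aff a (- b)" and "b \<noteq> 0"
proof -
  show double: "ec_add c (Aff a b) (Aff a b) = Aff a (- b)"
    using assms by (simp only: ec_add_Aff_eq_Inf_iff)
  show "b \<noteq> 0"
  proof
    assume "b = 0"
    then have "ec_add c (Aff a b) (Aff a b) = Inf"
      by simp
    with double show False
      by simp
  qed
qed

lemma ec_add_origin:
  assumes "on_curve c (Aff a b)" and "a \<noteq> 0"
  shows "ec_add c (Aff 0 0) (Aff a b) = Aff (c / a) (- (b * c) / a ^ 2)"
  using assms by (simp add: Let_def field_simps power2_eq_square power3_eq_cube)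

lemma proj_eq_mult_vector3_iff:
  fixes m :: "'a::field ^ 3 ^ 3"
  shows "proj_eq (m *v vector [x, y, z]) (vector [u, v, w]) \<longleftrightarrow>
    (\<exists>l. l \<noteq> 0 \<and> m$1$1 * x + m$1$2 * y + m$1$3 * z = l * u
      \<and> m$2$1 * x + m$2$2 * y + m$2$3 * z = l * v
      \<and> m$3$1 * x + m$3$2 * y + m$3$3 * z = l * w)"
  by (simp add: proj_eq_def vec_eq_iff forall_3 matrix_vector_mult_def sum_3)

lemma lemma_mat_if_maps_points:
  fixes m :: "'a::field ^ 3 ^ 3"
  assumes "R \<noteq> 0" "a \<noteq> 0" "b \<noteq> 0" "(2::'a) \<noteq> 0"
    and O: "proj_eq (m *v vector [0, 1, 0]) (vector [a, b, 1 / R])"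
    and negQ: "proj_eq (m *v vector [a, - b, 1 / R]) (vector [0, 1, 0])"
    and Q: "proj_eq (m *v vector [a, b, 1 / R]) (vector [a, - b, 1 / R])"
    and T: "proj_eq (m *v vector [0, 0, 1 / R]) (vector [- 1 / (R * a), b / (R * a ^ 2), 1 / R])"
  shows "\<exists>c \<nu>. c \<noteq> 0 \<and> \<nu> \<noteq> 0 \<and> m = (\<chi> i j. c * lemma_mat R a b \<nu> $ i $ j)"
proof -
  obtain l1 where "l1 \<noteq> 0" and O_rows: "m$1$2 = l1 * a" "m$2$2 = l1 * b" "m$3$2 = l1 / R"
    using O by (auto simp: proj_eq_mult_vector3_iff)
  obtain l4 where "l4 \<noteq> 0" and T_rows: "m$1$3 = - l4 / a" "m$2$3 = l4 * b / a ^ 2" "m$3$3 = l4"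
    using T \<open>R \<noteq> 0\<close> by (auto simp: proj_eq_mult_vector3_iff field_simps)
  obtain l2 where negQ_rows: "m$1$1 * a - m$1$2 * b + m$1$3 / R = 0"
      "m$2$1 * a - m$2$2 * b + m$2$3 / R = l2" "m$3$1 * a - m$3$2 * b + m$3$3 / R = 0"
    using negQ by (auto simp: proj_eq_mult_vector3_iff)
  obtain l3 where Q_rows: "m$1$1 * a + m$1$2 * b + m$1$3 / R = l3 * a"
      "m$2$1 * a + m$2$2 * b + m$2$3 / R = - l3 * b"
    using Q by (auto simp: proj_eq_mult_vector3_iff)
  have "2 * m$1$2 * b = l3 * a"
    using arg_cong2[where f = "(-)", OF Q_rows(1) negQ_rows(1)] by (simp add: algebra_simps)
  then have "l3 = 2 * l1 * b"
    using \<open>a \<noteq> 0\<close> unfolding O_rows by (simp add: algebra_simps)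
  moreover have "2 * m$2$2 * b = - l3 * b - l2"
    using arg_cong2[where f = "(-)", OF Q_rows(2) negQ_rows(2)] by (simp add: algebra_simps)
  ultimately have l2: "l2 = - 4 * l1 * b ^ 2"
    unfolding O_rows by (simp add: algebra_simps power2_eq_square add_eq_0_iff)
  define c \<nu> where "c = l1 / (R * a)" and "\<nu> = l4 / (2 * l1 * a ^ 2 * b)"
  have "c \<noteq> 0" "\<nu> \<noteq> 0"
    using \<open>R \<noteq> 0\<close> \<open>a \<noteq> 0\<close> \<open>b \<noteq> 0\<close> \<open>2 \<noteq> 0\<close> \<open>l1 \<noteq> 0\<close> \<open>l4 \<noteq> 0\<close>
    by (simp_all add: c_def \<nu>_def)
  have l1: "l1 = c * R * a" and l4: "l4 = 2 * c * R * a ^ 3 * b * \<nu>"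
    using \<open>R \<noteq> 0\<close> \<open>a \<noteq> 0\<close> \<open>b \<noteq> 0\<close> \<open>2 \<noteq> 0\<close> \<open>l1 \<noteq> 0\<close>
    by (simp_all add: c_def \<nu>_def field_simps power2_eq_square power3_eq_cube)
  have col2: "m$1$2 = c * (R * a ^ 2)" "m$2$2 = c * (R * a * b)" "m$3$2 = c * a"
    using O_rows \<open>R \<noteq> 0\<close> unfolding l1 by (simp_all add: power2_eq_square)
  have col3: "m$1$3 = c * (- 2 * R * a ^ 2 * b * \<nu>)" "m$2$3 = c * (2 * R * a * b ^ 2 * \<nu>)"
      "m$3$3 = c * (2 * R * a ^ 3 * b * \<nu>)"
    using T_rows \<open>a \<noteq> 0\<close> unfolding l4 by (simp_all add: field_simps power2_eq_square power3_eq_cube)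
  have "m$1$1 * a = c * (R * a * b + 2 * a * b * \<nu>) * a"
      "m$2$1 * a = c * ((- 3 * R - 2 * \<nu>) * b ^ 2) * a"
      "m$3$1 * a = c * ((1 - 2 * \<nu> * a ^ 2) * b) * a"
    using negQ_rows \<open>R \<noteq> 0\<close> unfolding col2 col3 l2 l1
    by (simp_all add: field_simps power2_eq_square power3_eq_cube)
  then have col1: "m$1$1 = c * (R * a * b + 2 * a * b * \<nu>)"
      "m$2$1 = c * ((- 3 * R - 2 * \<nu>) * b ^ 2)" "m$3$1 = c * ((1 - 2 * \<nu> * a ^ 2) * b)"
    using \<open>a \<noteq> 0\<close> by simp_all
  have "m = (\<chi> i j. c * lemma_mat R a b \<nu> $ i $ j)"
    unfolding vec_eq_iff forall_3 lemma_mat_def by (simp add: col1 col2 col3)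
  with \<open>c \<noteq> 0\<close> \<open>\<nu> \<noteq> 0\<close> show ?thesis
    by blast
qed

theorem translation_matrix_eq_lemma_mat:
  fixes m :: "'a::field ^ 3 ^ 3"
  assumes "R \<noteq> 0" and "(2::'a) \<noteq> 0"
    and Q_on: "on_curve (- 1 / R) (Aff a b)"
    and Q_3tors: "ec_add (- 1 / R) (Aff a b) (ec_add (- 1 / R) (Aff a b) (Aff a b)) = Inf"
    and transl: "\<And>P. on_curve (- 1 / R) P \<Longrightarrow>
      proj_eq (m *v proj_coords (1 / R) P) (proj_coords (1 / R) (ec_add (- 1 / R) P (Aff a b)))"
  shows "\<exists>\<nu>. \<nu> \<noteq> 0 \<and> (\<exists>c. c \<noteq> 0 \<and> m = (\<chi> i j. c * lemma_mat R a b \<nu> $ i $ j))"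
proof -
  have double: "ec_add (- 1 / R) (Aff a b) (Aff a b) = Aff a (- b)" and "b \<noteq> 0"
    using ec_add_3_torsionD[OF Q_3tors] by simp_all
  have "a \<noteq> 0"
    using Q_on \<open>b \<noteq> 0\<close> by auto
  have "proj_eq (m *v vector [0, 1, 0]) (vector [a, b, 1 / R])"
    using transl[of Inf] by simp
  moreover have "proj_eq (m *v vector [a, - b, 1 / R]) (vector [0, 1, 0])"
    using transl[of "Aff a (- b)"] Q_on by simp
  moreover have "proj_eq (m *v vector [a, b, 1 / R]) (vector [a, - b, 1 / R])"
    using transl[of "Aff a b"] Q_on double by simp
  moreover have "proj_eq (m *v vector [0, 0, 1 / R]) (vector [- 1 / (R * a), b / (R * a ^ 2), 1 / R])"
    using transl[of "Aff 0 0"] ec_add_origin[OF Q_on \<open>a \<noteq> 0\<close>] by simp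
  ultimately show ?thesis
    using lemma_mat_if_maps_points \<open>R \<noteq> 0\<close> \<open>a \<noteq> 0\<close> \<open>b \<noteq> 0\<close> \<open>2 \<noteq> 0\<close> by blast
qed

theorem lemma3p9:
  fixes r :: int and a b :: "'k::field" and A :: "'k ^ 3 ^ 3"
    and \<phi> :: "'k \<Rightarrow> 'L::alg_closed_field"
  assumes r: "r \<noteq> 0"
    and char: "of_int (2 * r) \<noteq> (0::'k)"
    and Q_on: "on_curve (- 1 / of_int r) (Aff a b)"
    and Q_3tors: "ec_add (- 1 / of_int r) (Aff a b) (ec_add (- 1 / of_int r) (Aff a b) (Aff a b)) = Inf"
    and A_GL: "det A \<noteq> 0"
    and hom: "is_field_hom \<phi>"
    and transl: "\<forall>P. on_curve (\<phi> (- 1 / of_int r)) P \<longrightarrow>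
        proj_eq (map_mat \<phi> A *v proj_coords (\<phi> (1 / of_int r)) P)
                (proj_coords (\<phi> (1 / of_int r)) (ec_add (\<phi> (- 1 / of_int r)) P (Aff (\<phi> a) (\<phi> b))))"
  shows "\<exists>\<nu>::'k. \<nu> \<noteq> 0 \<and> (\<exists>c::'k. c \<noteq> 0 \<and> A = (\<chi> i j. c * lemma_mat (of_int r) a b \<nu> $ i $ j))"
proof -
  interpret field_hom \<phi>
    using hom by (rule field_hom.intro)
  have r_nonzero: "of_int r \<noteq> (0::'k)" and two_nonzero: "(2::'k) \<noteq> 0"
    using char by auto
  have transl_K: "proj_eq (A *v proj_coords (1 / of_int r) P)
      (proj_coords (1 / of_int r) (ec_add (- 1 / of_int r) P (Aff a b)))"
    if "on_curve (- 1 / of_int r) P" for P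
  proof (rule proj_eq_map_vecD)
    show "proj_eq (map_vec \<phi> (A *v proj_coords (1 / of_int r) P))
        (map_vec \<phi> (proj_coords (1 / of_int r) (ec_add (- 1 / of_int r) P (Aff a b))))"
      using transl[rule_format, of "map_ept \<phi> P"] that
      by (simp add: map_vec_matrix_vector_mult map_vec_proj_coords map_ept_ec_add on_curve_map_ept)
    show "proj_coords (1 / of_int r) (ec_add (- 1 / of_int r) P (Aff a b)) \<noteq> 0"
      using r_nonzero by (simp add: proj_coords_nonzero)
  qed
  show ?thesis
    using r_nonzero two_nonzero Q_on Q_3tors transl_K by (rule translation_matrix_eq_lemma_mat)
qed

end
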